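(* In the setting of the context, the involute $N$ (the closed polygonal curve formed by the segments $N_{i-\frac12}N_{i+\frac12}$), together with the region $\overline N$ bounded by it, is contained in the region $\overline M$ bounded by the central equidistant $M$.
   Context: $[x,y]$ denotes the determinant of the matrix with columns $x,y\in\mathbb{R}^2$. Fix $n\ge2$; indices (integer and half-integer) are read modulo $2n$. $U$ is a convex $2n$-gon with distinct vertices $U_1,\dots,U_{2n}$ in counterclockwise order with $U_{i+n}=-U_i$, and $V_{i+\frac12}=(U_{i+1}-U_i)/[U_i,U_{i+1}]$. Let $c>0$ and let $P$ be a convex polygon with nonempty interior and vertex list $P_1,\dots,P_{2n}$ (listed counterclockwise, consecutive entries may coincide) with $P_{i+1}-P_i$ a nonnegative multiple of $V_{i+\frac12}$ and $P_i-P_{i+n}=2cU_i$ for all $i$. The central equidistant $M$ is the closed polygonal curve with vertices $M_i=\frac12(P_i+P_{i+n})$; define $\alpha_{i+\frac12}$ by $M_{i+1}-M_i=\alpha_{i+\frac12}(U_{i+1}-U_i)$, $\beta_i=\frac12\sum_{j=i}^{i+n-1}\alpha_{j+\frac12}[U_j,U_{j+1}]$, and the involute $N_{i+\frac12}=M_i+\beta_iV_{i+\frac12}$. For a closed polygonal curve $X$, its exterior is the set of points of the plane that can be joined to a point of (the boundary curve of) $P$ by a continuous path not meeting $X$, and the region $\overline X$ bounded by $X$ is the complement of the exterior. *)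

theory Defs
  imports "HOL-Analysis.Analysis"
begin

text \<open>Points of the plane are vectors of type real^2. Integer and half-integer
indices are encoded by functions on int that are 2n-periodic; a half-integer
index i+1/2 is encoded by the integer i.\<close>

definition det2 :: "real^2 \<Rightarrow> real^2 \<Rightarrow> real" where
  "det2 x y = x$1 * y$2 - y$1 * x$2"

definition Vh :: "(int \<Rightarrow> real^2) \<Rightarrow> int \<Rightarrow> real^2" where
  "Vh U i = (1 / det2 (U i) (U (i+1))) *\<^sub>R (U (i+1) - U i)"

definition Mv :: "(int \<Rightarrow> real^2) \<Rightarrow> nat \<Rightarrow> int \<Rightarrow> real^2" where
  "Mv P n i = (1/2) *\<^sub>R (P i + P (i + int n))"

definition alph :: "(int \<Rightarrow> real^2) \<Rightarrow> (int \<Rightarrow> real^2) \<Rightarrow> nat \<Rightarrow> int \<Rightarrow> real" where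
  "alph U P n i = (THE a. Mv P n (i+1) - Mv P n i = a *\<^sub>R (U (i+1) - U i))"

definition beta :: "(int \<Rightarrow> real^2) \<Rightarrow> (int \<Rightarrow> real^2) \<Rightarrow> nat \<Rightarrow> int \<Rightarrow> real" where
  "beta U P n i = (1/2) * (\<Sum>j\<in>{i..i + int n - 1}. alph U P n j * det2 (U j) (U (j+1)))"

definition Nh :: "(int \<Rightarrow> real^2) \<Rightarrow> (int \<Rightarrow> real^2) \<Rightarrow> nat \<Rightarrow> int \<Rightarrow> real^2" where
  "Nh U P n i = Mv P n i + beta U P n i *\<^sub>R Vh U i"

definition polyline :: "(int \<Rightarrow> real^2) \<Rightarrow> nat \<Rightarrow> (real^2) set" where
  "polyline X m = (\<Union>i\<in>{0..<int m}. closed_segment (X i) (X (i+1)))"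

text \<open>exterior of a curve X relative to the boundary curve B of P, and the region bounded by X\<close>
definition exterior_of :: "(real^2) set \<Rightarrow> (real^2) set \<Rightarrow> (real^2) set" where
  "exterior_of B X = {z. \<exists>g. path g \<and> pathstart g = z \<and> pathfinish g \<in> B \<and> path_image g \<inter> X = {}}"

definition region_of :: "(real^2) set \<Rightarrow> (real^2) set \<Rightarrow> (real^2) set" where
  "region_of B X = - exterior_of B X"

end

theory Submission
  imports Defs "HOL-Complex_Analysis.Complex_Analysis" "HOL-Library.Periodic_Fun"
begin

text \<open>The winding number of the closed polygon M around a point y off the lines of its edges is
  given by a discrete Gauss--Bonnet formula: the edge directions V_{i+1/2} turn exactly once
  counterclockwise, so the winding number is 1 minus the number of indices i at which y lies to
  the left of the line through M_i and to the right of the line through M_{i+1} (both lines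
  directed by the edge directions there).
  Let z lie on the open segment N_{k-1/2} N_{k+1/2} = M_k + \<beta>_k [V_{k-1/2}, V_{k+1/2}], with
  \<beta>_k \<noteq> 0 and z not on M.  Telescoping [U_j, M_j - z] over half a period gives
  \<Sum>_{i<n} [U_{k+i}, U_{k+i+1}] [V_{k+i+1/2}, M_{k+i} - z] = 0.  The factors
  [V_{j+1/2}, M_j - z] at j = k - 1, k, k + n - 1 have the signs of -\<beta>_k, \<beta>_k, \<beta>_k, so
  the sum vanishing forces a sign -\<beta>_k at some k + i with 0 < i < n - 1: within one period
  the signs follow the pattern -, +, -, +.  Hence the winding number
  of M around z (a generic point near z) is at most -1, whereas it vanishes at the boundary of
  the convex polygon P, which contains M.  So z cannot be joined to the boundary of P without
  crossing M.  The endpoints of the segments follow by closedness, and then the region bounded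
  by N lies in the one bounded by M.\<close>

lemma periodic_int_mod:
  fixes f :: "int \<Rightarrow> 'a"
  assumes "\<And>j. f (j + m) = f j"
  shows "f (j mod m) = f j"
proof -
  interpret periodic_fun_simple f m by standard (rule assms)
  show ?thesis using plus_of_int[of "j mod m" "j div m"] by simp
qed

lemma sum_int_interval_shift: "(\<Sum>j\<in>{k..k + int n - 1}. f j) = (\<Sum>i<n. f (k + int i))"
proof (induction n)
  case (Suc n)
  have "{k..k + int (Suc n) - 1} = insert (k + int n) {k..k + int n - 1}" by auto
  then show ?case using Suc by (simp add: add.commute)
qed simp

subsection \<open>Winding numbers of polygons\<close>

lemma winding_number_linepath_Ln:
  assumes V: "V \<noteq> 0" and S: "\<forall>x\<in>closed_segment a b. Im ((x - z) / V) \<noteq> 0"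
  shows "winding_number (linepath a b) z = (Ln ((b - z) / V) - Ln ((a - z) / V)) / (2*pi*\<i>)"
proof -
  let ?H = "{x. Im ((x - z) / V) \<noteq> 0}"
  have zn: "z \<notin> path_image (linepath a b)" using S by auto
  have D: "((\<lambda>w. Ln ((w - z) / V)) has_field_derivative 1 / (w - z)) (at w within ?H)"
    if "w \<in> ?H" for w
  proof -
    have nn: "(w - z) / V \<notin> \<real>\<^sub>\<le>\<^sub>0" using that by (auto simp: complex_nonpos_Reals_iff)
    have "((\<lambda>w. (w - z) / V) has_field_derivative 1 / V) (at w)"
      using V by (auto intro!: derivative_eq_intros)
    from DERIV_chain2[OF has_field_derivative_Ln[OF nn] this]
    have "((\<lambda>w. Ln ((w - z) / V)) has_field_derivative inverse ((w - z) / V) * (1 / V)) (at w)" .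
    moreover have "w \<noteq> z" using that by auto
    then have "inverse ((w - z) / V) * (1 / V) = 1 / (w - z)" using V by (simp add: divide_simps)
    ultimately show ?thesis by (metis has_field_derivative_at_within)
  qed
  have "path_image (linepath a b) \<subseteq> ?H" using S by auto
  then have "((\<lambda>w. 1 / (w - z)) has_contour_integral (Ln ((b - z) / V) - Ln ((a - z) / V))) (linepath a b)"
    using contour_integral_primitive[OF D valid_path_linepath] by simp
  then show ?thesis
    using winding_number_valid_path[OF valid_path_linepath zn] contour_integral_unique by fastforce
qed

lemma Re_winding_number_linepath_Arg:
  assumes V: "V \<noteq> 0" and S: "\<forall>x\<in>closed_segment a b. Im ((x - z) / V) \<noteq> 0"
  shows "2*pi * Re (winding_number (linepath a b) z) = Arg ((b - z) / V) - Arg ((a - z) / V)"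
proof -
  have "(b - z) / V \<noteq> 0" "(a - z) / V \<noteq> 0" using S[rule_format, of b] S[rule_format, of a] by auto
  then show ?thesis
    by (simp add: winding_number_linepath_Ln[OF assms] Arg_eq_Im_Ln Re_divide power2_eq_square field_simps)
qed

lemma Arg_mult_Im_neg:
  assumes e0: "Im e \<noteq> 0" and r: "Im r < 0" and er: "Im (e * r) \<noteq> 0"
  shows "Arg (e * r) = Arg e + Arg r + (if Im e < 0 \<and> Im (e * r) > 0 then 2*pi else 0)"
proof -
  have ne: "e \<noteq> 0" "r \<noteq> 0" using e0 r by auto
  have Arg_Ln: "Arg x = Im (Ln x)" if "x \<noteq> 0" for x using Arg_eq_Im_Ln that by auto
  have r1: "- pi < Arg r" "Arg r < 0" using mpi_less_Arg Arg_neg_iff r by auto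
  have L: "Ln (e * r) = (if Im (Ln e + Ln r) \<le> -pi then (Ln e + Ln r) + \<i> * of_real (2*pi)
            else if Im (Ln e + Ln r) > pi then (Ln e + Ln r) - \<i> * of_real (2*pi)
            else Ln e + Ln r)" using Ln_times[OF ne] .
  have Ae: "-pi < Arg e" using mpi_less_Arg by auto
  show ?thesis
  proof (cases "Im e < 0")
    case True
    then have e1: "Arg e < 0" using Arg_neg_iff by auto
    show ?thesis
    proof (cases "Arg e + Arg r \<le> -pi")
      case True
      then have "Arg (e * r) = Arg e + Arg r + 2*pi" using L Arg_Ln ne by (simp add: mult_eq_0_iff)
      moreover have "Arg (e * r) > 0" using calculation True r1 e1 Ae by linarith
      then have "Im (e * r) > 0" using er by (metis Arg_pos_iff linorder_neqE_linordered_idom)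
      ultimately show ?thesis using \<open>Im e < 0\<close> by simp
    next
      case False
      then have "Arg (e * r) = Arg e + Arg r" using L Arg_Ln ne r1 e1 by (simp add: mult_eq_0_iff)
      moreover have "Arg (e * r) < 0" using calculation r1 e1 by linarith
      then have "Im (e * r) < 0" using Arg_neg_iff by auto
      ultimately show ?thesis by simp
    qed
  next
    case False
    then have "Im e > 0" using e0 by linarith
    then have "0 < Arg e" "Arg e < pi" using Arg_lt_pi by blast+
    then have "Arg (e * r) = Arg e + Arg r" using L Arg_Ln ne r1 by (simp add: mult_eq_0_iff)
    then show ?thesis using False by simp
  qed
qed

lemma Im_divide_cnj: "Im (y / V) = Im (cnj V * y) / (cmod V)\<^sup>2"
  by (simp add: complex_div_cnj[of y V] mult.commute Im_divide power2_eq_square)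

lemma Im_cnj_mult_closed_segment:
  assumes ab: "b - a = of_real t * V" and x: "x \<in> closed_segment a b"
  shows "Im (cnj V * (x - z)) = Im (cnj V * (a - z))"
proof -
  obtain u where "x = (1 - u) *\<^sub>R a + u *\<^sub>R b" using x unfolding closed_segment_def by blast
  then have "x = a + of_real (u * t) * V" using ab by (simp add: scaleR_conv_of_real algebra_simps)
  then have "cnj V * (x - z) = cnj V * (a - z) + of_real (u * t) * (cnj V * V)"
    by (simp add: algebra_simps)
  moreover have "Im (of_real (u * t) * (cnj V * V)) = 0" by (simp add: complex_mult_cnj)
  ultimately show ?thesis by simp
qed

text \<open>The contribution of one edge, read off in the frames of its direction V and of the next
  direction W: the branch of the argument jumps by 2\<pi> exactly when z lies to the left of
  the line a + \<real>V and to the right of the line b + \<real>W.\<close>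

lemma Re_winding_number_linepath_step:
  assumes VW: "Im (cnj V * W) > 0" and ab: "b - a = of_real t * V"
    and a: "Im (cnj V * (a - z)) \<noteq> 0" and b: "Im (cnj W * (b - z)) \<noteq> 0"
  shows "2*pi * Re (winding_number (linepath a b) z) =
           Arg ((b - z) / W) - Arg ((a - z) / V) + Arg (W / V)
           - (if Im (cnj V * (a - z)) < 0 \<and> Im (cnj W * (b - z)) > 0 then 2*pi else 0)"
proof -
  have V: "V \<noteq> 0" and W: "W \<noteq> 0" using VW by auto
  have V2: "(cmod V)\<^sup>2 > 0" and W2: "(cmod W)\<^sup>2 > 0" using V W by auto
  have seg: "Im ((x - z) / V) = Im (cnj V * (a - z)) / (cmod V)\<^sup>2" if "x \<in> closed_segment a b" for x
    using Im_cnj_mult_closed_segment[OF ab that] by (simp add: Im_divide_cnj)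
  define e where "e = (b - z) / V"
  define r where "r = V / W"
  have Ime: "Im e = Im (cnj V * (a - z)) / (cmod V)\<^sup>2" using seg[of b] by (simp add: e_def)
  have Imer: "Im (e * r) = Im (cnj W * (b - z)) / (cmod W)\<^sup>2"
    using V by (simp add: e_def r_def Im_divide_cnj)
  have "Im r = Im (cnj W * V) / (cmod W)\<^sup>2" by (simp add: r_def Im_divide_cnj)
  moreover have "Im (cnj W * V) < 0" using VW by (simp add: mult.commute)
  ultimately have r_neg: "Im r < 0" using W2 by (simp add: divide_less_0_iff)
  have "Arg (e * r) = Arg e + Arg r + (if Im e < 0 \<and> Im (e * r) > 0 then 2*pi else 0)"
    by (rule Arg_mult_Im_neg) (use Ime Imer a b V2 W2 r_neg in auto)
  moreover have "e * r = (b - z) / W" using V by (simp add: e_def r_def)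
  moreover have "Arg r = - Arg (W / V)"
  proof -
    have "Im (W / V) > 0" using VW V2 by (simp add: Im_divide_cnj)
    then show ?thesis using Arg_inverse[of "W / V"] by (simp add: r_def complex_is_Real_iff)
  qed
  moreover have "2*pi * Re (winding_number (linepath a b) z) = Arg e - Arg ((a - z) / V)"
    using Re_winding_number_linepath_Arg[OF V] seg a V2 by (simp add: e_def)
  ultimately show ?thesis
    using Ime Imer V2 W2 by (simp add: divide_less_0_iff zero_less_divide_iff)
qed

fun polygon_path :: "(int \<Rightarrow> complex) \<Rightarrow> nat \<Rightarrow> real \<Rightarrow> complex" where
  "polygon_path w 0 = linepath (w 0) (w 0)"
| "polygon_path w (Suc k) = polygon_path w k +++ linepath (w (int k)) (w (int k + 1))"

lemma valid_path_polygon_path: "valid_path (polygon_path w k)"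
  and pathstart_polygon_path [simp]: "pathstart (polygon_path w k) = w 0"
  and pathfinish_polygon_path [simp]: "pathfinish (polygon_path w k) = w (int k)"
proof (induction k)
  case (Suc k)
  case 1 show ?case using Suc by (auto intro!: valid_path_join simp: add.commute)
next
  case (Suc k)
  case 2 show ?case using Suc by simp
next
  case (Suc k)
  case 3 show ?case by (simp add: add.commute)
qed (simp_all add: valid_path_linepath)

lemma path_polygon_path: "path (polygon_path w k)"
  using valid_path_polygon_path valid_path_imp_path by blast

lemma path_image_polygon_path:
  "path_image (polygon_path w k) = insert (w 0) (\<Union>j<k. closed_segment (w (int j)) (w (int j + 1)))"
  by (induction k) (auto simp: path_image_join lessThan_Suc)

lemma winding_number_polygon_path:
  assumes "z \<notin> path_image (polygon_path w k)"
  shows "winding_number (polygon_path w k) z = (\<Sum>j<k. winding_number (linepath (w (int j)) (w (int j + 1))) z)"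
  using assms
proof (induction k)
  case 0
  then have "z \<noteq> w 0" by (simp add: path_image_polygon_path)
  then have "winding_number (linepath (w 0) (w 0)) z = 0" by (rule winding_number_trivial)
  then show ?case by (simp only: polygon_path.simps lessThan_0 sum.empty)
next
  case (Suc k)
  then have "z \<notin> path_image (polygon_path w k)" "z \<notin> closed_segment (w (int k)) (w (int k + 1))"
    by (auto simp: path_image_join)
  then show ?case using Suc.IH by (simp add: winding_number_join path_polygon_path)
qed

definition turning :: "(int \<Rightarrow> complex) \<Rightarrow> nat \<Rightarrow> real" where
  "turning V m = (\<Sum>j<m. Arg (V (int j + 1) / V (int j)))"

definition upcrossings :: "(int \<Rightarrow> real) \<Rightarrow> nat \<Rightarrow> nat" where
  "upcrossings f m = card {j. j < m \<and> f (int j) < 0 \<and> f (int j + 1) > 0}"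

text \<open>A discrete Gauss--Bonnet formula for a closed polygon whose edge directions V turn
  strictly counterclockwise at each vertex, valid for z off all the lines spanned by the edges.\<close>

theorem winding_number_polygon_path_upcrossings:
  fixes V w :: "int \<Rightarrow> complex" and z :: complex
  assumes closed: "w (int m) = w 0" "V (int m) = V 0"
    and rot: "\<And>j. Im (cnj (V j) * V (j + 1)) > 0"
    and edge: "\<And>j. \<exists>t. w (j + 1) - w j = of_real t * V j"
    and off: "\<And>j. Im (cnj (V j) * (w j - z)) \<noteq> 0"
  shows "2*pi * Re (winding_number (polygon_path w m) z) =
           turning V m - 2*pi * upcrossings (\<lambda>j. Im (cnj (V j) * (w j - z))) m"
proof -
  define F where "F = (\<lambda>j. Im (cnj (V j) * (w j - z)))"
  define A where "A j = Arg ((w j - z) / V j)" for j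
  have "z \<notin> closed_segment (w j) (w (j + 1))" for j
    using edge[of j] off[of j] Im_cnj_mult_closed_segment[of "w (j + 1)" "w j" _ "V j" z z] by force
  moreover have "z \<noteq> w 0" using off[of 0] by auto
  ultimately have z: "z \<notin> path_image (polygon_path w m)" by (auto simp: path_image_polygon_path)
  have step: "2*pi * Re (winding_number (linepath (w j) (w (j + 1))) z) =
      A (j + 1) - A j + Arg (V (j + 1) / V j) - (if F j < 0 \<and> F (j + 1) > 0 then 2*pi else 0)" for j
  proof -
    obtain t where "w (j + 1) - w j = of_real t * V j" using edge by blast
    from Re_winding_number_linepath_step[OF rot this off off] show ?thesis by (simp add: A_def F_def)
  qed
  have "2*pi * Re (winding_number (polygon_path w m) z)
      = (\<Sum>j<m. 2*pi * Re (winding_number (linepath (w (int j)) (w (int j + 1))) z))"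
    by (simp add: winding_number_polygon_path[OF z] Re_sum sum_distrib_left)
  also have "\<dots> = (\<Sum>j<m. A (int j + 1) - A (int j) + Arg (V (int j + 1) / V (int j))
                      - (if F (int j) < 0 \<and> F (int j + 1) > 0 then 2*pi else 0))"
    by (simp only: step)
  also have "\<dots> = (\<Sum>j<m. A (int j + 1) - A (int j)) + turning V m
      - (\<Sum>j<m. if F (int j) < 0 \<and> F (int j + 1) > 0 then 2*pi else 0)"
    by (simp only: sum.distrib sum_subtractf turning_def)
  also have "(\<Sum>j<m. A (int j + 1) - A (int j)) = 0"
    using sum_lessThan_telescope[of "\<lambda>j. A (int j)" m] closed by (simp add: A_def add.commute)
  also have "(\<Sum>j<m. if F (int j) < 0 \<and> F (int j + 1) > 0 then 2*pi else 0) = 2*pi * upcrossings F m"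
  proof -
    have "{..<m} \<inter> {j. F (int j) < 0 \<and> F (int j + 1) > 0} = {j. j < m \<and> F (int j) < 0 \<and> F (int j + 1) > 0}"
      by auto
    then show ?thesis by (simp add: sum.If_cases upcrossings_def)
  qed
  finally show ?thesis unfolding F_def by simp
qed

lemma upcrossing_between:
  fixes f :: "int \<Rightarrow> real"
  assumes nz: "\<And>j. f j \<noteq> 0" and "f a < 0" "f b > 0" "a < b"
  shows "\<exists>j. a \<le> j \<and> j < b \<and> f j < 0 \<and> f (j + 1) > 0"
proof -
  define S where "S = {j. a \<le> j \<and> j < b \<and> f j < 0}"
  have "finite S" by (rule finite_subset[of _ "{a..<b}"]) (auto simp: S_def)
  moreover have "S \<noteq> {}" using assms by (auto simp: S_def)
  ultimately have j: "Max S \<in> S" and max: "\<And>k. k \<in> S \<Longrightarrow> k \<le> Max S" by auto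
  have "f (Max S + 1) > 0"
  proof (cases "Max S + 1 = b")
    case False
    then have "Max S + 1 \<notin> S \<and> Max S + 1 < b" using max[of "Max S + 1"] j by (auto simp: S_def)
    then show ?thesis using j nz[of "Max S + 1"] by (auto simp: S_def)
  qed (use assms in simp)
  then show ?thesis using j by (auto simp: S_def)
qed

lemma two_le_upcrossings:
  fixes f :: "int \<Rightarrow> real"
  assumes p: "p > 0" and per: "\<And>j. f (j + int p) = f j" and nz: "\<And>j. f j \<noteq> 0"
    and ord: "a1 < a2" "a2 < a3" "a3 < a4" "a4 - a1 \<le> int p"
    and sgn: "f a1 < 0" "f a2 > 0" "f a3 < 0" "f a4 > 0"
  shows "2 \<le> upcrossings f p"
proof -
  define S where "S = {j. j < p \<and> f (int j) < 0 \<and> f (int j + 1) > 0}"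
  obtain j1 where j1: "a1 \<le> j1" "j1 < a2" "f j1 < 0" "f (j1 + 1) > 0"
    using upcrossing_between[OF nz sgn(1,2) ord(1)] by blast
  obtain j2 where j2: "a3 \<le> j2" "j2 < a4" "f j2 < 0" "f (j2 + 1) > 0"
    using upcrossing_between[OF nz sgn(3,4) ord(3)] by blast
  have mod_in_S: "nat (j mod int p) \<in> S" if "f j < 0" "f (j + 1) > 0" for j
  proof -
    have "f (j mod int p + 1) = f (j + 1)"
      using periodic_int_mod[of f, OF per, of "j + 1"] periodic_int_mod[of f, OF per, of "j mod int p + 1"]
      by (metis mod_add_left_eq)
    moreover have "0 \<le> j mod int p" "j mod int p < int p" using p by simp_all
    ultimately show ?thesis using that periodic_int_mod[of f, OF per, of j] by (auto simp: S_def nat_less_iff)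
  qed
  have "nat (j1 mod int p) \<noteq> nat (j2 mod int p)"
  proof
    assume "nat (j1 mod int p) = nat (j2 mod int p)"
    then have "j2 mod int p = j1 mod int p" using p by (simp add: nat_eq_iff)
    then have "int p dvd (j2 - j1)" by (simp add: mod_eq_dvd_iff)
    moreover have "0 < j2 - j1" "j2 - j1 < int p" using j1 j2 ord by auto
    ultimately show False using zdvd_imp_le by fastforce
  qed
  then have "card {nat (j1 mod int p), nat (j2 mod int p)} = 2" by simp
  moreover have "{nat (j1 mod int p), nat (j2 mod int p)} \<subseteq> S" using mod_in_S j1 j2 by auto
  moreover have "finite S" by (simp add: S_def)
  ultimately show ?thesis by (metis card_mono S_def upcrossings_def)
qed

lemma exists_near_point_off_lines:
  fixes V w :: "'i \<Rightarrow> complex"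
  assumes J: "finite J" and V: "\<And>j. j \<in> J \<Longrightarrow> V j \<noteq> 0" and r: "r > 0"
  shows "\<exists>y. cmod (y - z) < r \<and> (\<forall>j\<in>J. Im (cnj (V j) * (w j - y)) \<noteq> 0)"
proof -
  obtain t :: real where t: "t \<notin> (\<lambda>j. Im (V j) / Re (V j)) ` J"
    using J by (metis ex_new_if_finite finite_imageI infinite_UNIV_char_0)
  define u where "u = Complex 1 t"
  have u0: "u \<noteq> 0" by (simp add: u_def complex_eq_iff)
  have cu: "Im (cnj (V j) * u) \<noteq> 0" if "j \<in> J" for j
  proof
    assume "Im (cnj (V j) * u) = 0"
    then have e: "Re (V j) * t = Im (V j)" by (simp add: u_def algebra_simps)
    show False
    proof (cases "Re (V j) = 0")
      case True then show False using e V[OF that] by (simp add: complex_eq_iff)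
    next
      case False then have "t = Im (V j) / Re (V j)" using e by (simp add: field_simps)
      then show False using t that by auto
    qed
  qed
  define B where "B = (\<lambda>j. Im (cnj (V j) * (w j - z)) / Im (cnj (V j) * u)) ` J"
  have "finite B" using J by (simp add: B_def)
  moreover have "infinite {0<..<r / cmod u}" using r u0 by simp
  ultimately obtain \<tau> where tau: "\<tau> \<in> {0<..<r / cmod u}" "\<tau> \<notin> B"
    by (meson finite_subset infinite_super subsetI)
  define y where "y = z + of_real \<tau> * u"
  have "cmod (y - z) = \<tau> * cmod u" using tau by (simp add: y_def norm_mult)
  also have "\<dots> < r" using tau u0 by (simp add: field_simps)
  finally have "cmod (y - z) < r" .
  moreover have "Im (cnj (V j) * (w j - y)) \<noteq> 0" if "j \<in> J" for j
  proof
    assume "Im (cnj (V j) * (w j - y)) = 0"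
    then have "Im (cnj (V j) * (w j - z)) - \<tau> * Im (cnj (V j) * u) = 0"
      by (simp add: y_def algebra_simps)
    then have "\<tau> = Im (cnj (V j) * (w j - z)) / Im (cnj (V j) * u)" using cu[OF that] by (simp add: field_simps)
    then show False using tau that by (auto simp: B_def)
  qed
  ultimately show ?thesis by blast
qed

lemma convex_Im_cnj_halfplane: "convex {x. Im (cnj a * (x - b)) \<ge> 0}"
proof -
  have "{x. Im (cnj a * (x - b)) \<ge> 0} = {x. Complex (- Im a) (Re a) \<bullet> x \<ge> Complex (- Im a) (Re a) \<bullet> b}"
    by (auto simp: inner_complex_def algebra_simps)
  then show ?thesis by (metis convex_halfspace_ge)
qed

lemma eventually_winding_number_eq:
  assumes "path \<gamma>" "pathfinish \<gamma> = pathstart \<gamma>" "z \<notin> path_image \<gamma>"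
  shows "\<forall>\<^sub>F y in nhds z. winding_number \<gamma> y = winding_number \<gamma> z"
proof -
  let ?S = "{y. y \<notin> path_image \<gamma> \<and> winding_number \<gamma> y = winding_number \<gamma> z}"
  have "open ?S" by (rule open_winding_number_levelsets[OF assms(1,2)])
  moreover have "z \<in> ?S" using assms(3) by simp
  ultimately have "\<forall>\<^sub>F y in nhds z. y \<in> ?S" by (rule eventually_nhds_in_open)
  then show ?thesis by (rule eventually_mono) simp
qed

subsection \<open>Polygons and regions in the real plane\<close>

definition cvec :: "real^2 \<Rightarrow> complex" where
  "cvec x = Complex (x$1) (x$2)"

lemma cvec_add [simp]: "cvec (x + y) = cvec x + cvec y"
  and cvec_diff [simp]: "cvec (x - y) = cvec x - cvec y"
  and cvec_minus [simp]: "cvec (- x) = - cvec x"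
  and cvec_scaleR [simp]: "cvec (r *\<^sub>R x) = of_real r * cvec x"
  by (auto simp: cvec_def complex_eq_iff)

lemma cvec_eq_0_iff [simp]: "cvec x = 0 \<longleftrightarrow> x = 0"
  by (auto simp: cvec_def complex_eq_iff vec_eq_iff forall_2)

lemma linear_cvec: "linear cvec"
  by (rule linearI) (auto simp: cvec_def complex_eq_iff)

lemma cvec_eq_iff [simp]: "cvec x = cvec y \<longleftrightarrow> x = y"
  by (auto simp: cvec_def vec_eq_iff forall_2)

lemma cvec_vector: "cvec (vector [Re y, Im y]) = y"
  by (simp add: cvec_def vector_2 complex_eq_iff)

lemma norm_cvec [simp]: "cmod (cvec x) = norm x"
  by (simp add: cvec_def cmod_def norm_vec_def L2_set_def sum_2)

lemma dist_cvec [simp]: "dist (cvec x) (cvec y) = dist x y"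
  by (metis cvec_diff dist_norm norm_cvec)

lemma continuous_on_cvec: "continuous_on S cvec"
  using linear_cvec linear_continuous_on linear_conv_bounded_linear by blast

lemma det2_cvec: "det2 x y = Im (cnj (cvec x) * cvec y)"
  by (simp add: det2_def cvec_def algebra_simps)

lemma det2_add_left: "det2 (x + y) z = det2 x z + det2 y z"
  and det2_add_right: "det2 z (x + y) = det2 z x + det2 z y"
  and det2_diff_left: "det2 (x - y) z = det2 x z - det2 y z"
  and det2_diff_right: "det2 z (x - y) = det2 z x - det2 z y"
  and det2_scaleR_left: "det2 (r *\<^sub>R x) z = r * det2 x z"
  and det2_scaleR_right: "det2 z (r *\<^sub>R x) = r * det2 z x"
  and det2_minus_left: "det2 (- x) z = - det2 x z"
  and det2_minus_right: "det2 z (- x) = - det2 z x"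
  and det2_self: "det2 x x = 0"
  and det2_swap: "det2 y x = - det2 x y"
  by (auto simp: det2_def algebra_simps)

lemmas det2_simps = det2_add_left det2_add_right det2_diff_left det2_diff_right
  det2_scaleR_left det2_scaleR_right det2_minus_left det2_minus_right det2_self

lemma closed_polyline: "closed (polyline X m)"
  by (auto simp: polyline_def intro!: closed_UN)

lemma closed_segment_subset_polyline:
  assumes m: "m > 0" and per: "\<And>j. X (j + int m) = X j"
  shows "closed_segment (X j) (X (j + 1)) \<subseteq> polyline X m"
proof -
  have "X (j mod int m) = X j" "X (j mod int m + 1) = X (j + 1)"
    using periodic_int_mod[of X, OF per, of j] periodic_int_mod[of X, OF per, of "j mod int m + 1"]
      periodic_int_mod[of X, OF per, of "j + 1"] by (simp_all add: mod_add_left_eq)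
  moreover have "j mod int m \<in> {0..<int m}" using m by simp
  then have "closed_segment (X (j mod int m)) (X (j mod int m + 1)) \<subseteq> polyline X m"
    unfolding polyline_def by blast
  ultimately show ?thesis by simp
qed

lemma image_cvec_closed_segment: "cvec ` closed_segment a b = closed_segment (cvec a) (cvec b)"
  using closed_segment_linear_image[OF linear_cvec] by simp

lemma path_image_polygon_path_cvec:
  assumes "m > 0"
  shows "path_image (polygon_path (\<lambda>j. cvec (X j)) m) = cvec ` polyline X m"
proof -
  have "{0..<int m} = int ` {..<m}"
    using image_int_atLeastLessThan[of 0 m] by (simp add: atLeast0LessThan)
  then have "cvec ` polyline X m = (\<Union>j<m. closed_segment (cvec (X (int j))) (cvec (X (int j + 1))))"
    unfolding polyline_def by (simp add: image_UN image_cvec_closed_segment)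
  moreover have "cvec (X 0) \<in> (\<Union>j<m. closed_segment (cvec (X (int j))) (cvec (X (int j + 1))))"
    using assms by (intro UN_I[of 0]) simp_all
  ultimately show ?thesis by (simp add: path_image_polygon_path insert_absorb)
qed

lemma winding_number_zero_frontier_convex:
  assumes \<gamma>: "path \<gamma>" "pathfinish \<gamma> = pathstart \<gamma>" and K: "convex K" "path_image \<gamma> \<subseteq> cvec ` K"
    and b: "b \<in> frontier K" "cvec b \<notin> path_image \<gamma>"
  shows "winding_number \<gamma> (cvec b) = 0"
proof -
  obtain e where e: "e > 0" "\<And>y. dist y (cvec b) < e \<Longrightarrow> winding_number \<gamma> y = winding_number \<gamma> (cvec b)"
    using eventually_winding_number_eq[OF \<gamma> b(2)] by (auto simp: eventually_nhds_metric)
  obtain y where y: "y \<notin> K" "dist b y < e" using b(1) e(1) frontier_straddle by metis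
  have "winding_number \<gamma> (cvec y) = 0"
  proof (rule winding_number_zero_outside[OF \<gamma>(1) _ \<gamma>(2) _ K(2)])
    show "convex (cvec ` K)" using K(1) convex_linear_image linear_cvec by blast
    show "cvec y \<notin> cvec ` K" using y by auto
  qed
  then show ?thesis using e(2)[of "cvec y"] y by (simp add: dist_commute)
qed

lemma subset_region_of: "X \<subseteq> region_of B X"
  by (auto simp: region_of_def exterior_of_def path_image_def pathstart_def)
     (metis atLeastAtMost_iff disjoint_iff image_eqI order_refl zero_le_one)

lemma closed_region_of:
  assumes "closed X"
  shows "closed (region_of B X)"
proof -
  have "open (exterior_of B X)"
  proof (subst open_contains_ball, intro ballI)
    fix z assume "z \<in> exterior_of B X"
    then obtain g where g: "path g" "pathstart g = z" "pathfinish g \<in> B" "path_image g \<inter> X = {}"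
      by (auto simp: exterior_of_def)
    have "z \<notin> X" using g by (metis disjoint_iff pathstart_in_path_image)
    then obtain e where e: "e > 0" "ball z e \<subseteq> - X"
      using assms open_contains_ball[of "- X"] by (auto simp: open_Compl)
    have "y \<in> exterior_of B X" if y: "y \<in> ball z e" for y
    proof -
      have "closed_segment y z \<subseteq> ball z e" using y e by (intro closed_segment_subset) auto
      then have "path_image (linepath y z +++ g) \<inter> X = {}"
        using g e by (auto simp: path_image_join)
      then show ?thesis using g unfolding exterior_of_def
        by (intro CollectI exI[of _ "linepath y z +++ g"]) auto
    qed
    then show "\<exists>e>0. ball z e \<subseteq> exterior_of B X" using e by blast
  qed
  then show ?thesis by (simp add: region_of_def closed_Compl)
qed

lemma region_of_subset:
  assumes "Y \<subseteq> region_of B X"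
  shows "region_of B Y \<subseteq> region_of B X"
proof
  fix x assume x: "x \<in> region_of B Y"
  show "x \<in> region_of B X"
  proof (rule ccontr)
    assume "x \<notin> region_of B X"
    then obtain g where g: "path g" "pathstart g = x" "pathfinish g \<in> B" "path_image g \<inter> X = {}"
      by (auto simp: region_of_def exterior_of_def)
    have "g t \<notin> Y" if t: "t \<in> {0..1}" for t
    proof -
      have "path_image (subpath t 1 g) \<inter> X = {}"
        using g(4) path_image_subpath_subset[of t 1 g] t by auto
      moreover have "path (subpath t 1 g)" using g(1) t by simp
      moreover have "pathfinish (subpath t 1 g) \<in> B" using g(3) by (simp add: pathfinish_def subpath_def)
      moreover have "pathstart (subpath t 1 g) = g t" by simp
      ultimately have "g t \<in> exterior_of B X" unfolding exterior_of_def by blast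
      then show ?thesis using assms by (auto simp: region_of_def)
    qed
    then have "path_image g \<inter> Y = {}" by (auto simp: path_image_def)
    then have "x \<in> exterior_of B Y" using g unfolding exterior_of_def by blast
    then show False using x by (simp add: region_of_def)
  qed
qed

lemma in_region_of_if_winding_number_nonzero:
  assumes \<gamma>: "path \<gamma>" "pathfinish \<gamma> = pathstart \<gamma>" "path_image \<gamma> = cvec ` X"
    and B: "\<And>b. b \<in> B \<Longrightarrow> b \<notin> X \<Longrightarrow> winding_number \<gamma> (cvec b) = 0"
    and w: "w \<notin> X \<Longrightarrow> winding_number \<gamma> (cvec w) \<noteq> 0"
  shows "w \<in> region_of B X"
proof (rule ccontr)
  assume "w \<notin> region_of B X"
  then obtain g where g: "path g" "pathstart g = w" "pathfinish g \<in> B" "path_image g \<inter> X = {}"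
    by (auto simp: region_of_def exterior_of_def)
  have "path (cvec \<circ> g)" using g(1) continuous_on_cvec by (rule path_continuous_image)
  then have "connected (path_image (cvec \<circ> g))" by (rule connected_path_image)
  moreover have "path_image (cvec \<circ> g) \<inter> path_image \<gamma> = {}"
    using g(4) \<gamma>(3) by (auto simp: path_image_compose)
  moreover have "cvec w \<in> path_image (cvec \<circ> g)" "cvec (pathfinish g) \<in> path_image (cvec \<circ> g)"
    using g(2) pathstart_in_path_image[of g] pathfinish_in_path_image[of g]
    by (simp_all add: path_image_compose)
  ultimately have "winding_number \<gamma> (cvec w) = winding_number \<gamma> (cvec (pathfinish g))"
    using winding_number_eq[OF \<gamma>(1,2)] by blast
  moreover have "w \<notin> X" "pathfinish g \<notin> X"
    using g(2,4) pathstart_in_path_image pathfinish_in_path_image by blast+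
  ultimately show False using B[OF g(3)] w by simp
qed

subsection \<open>The central equidistant and its involute\<close>

locale central_equidistant =
  fixes n :: nat and U P :: "int \<Rightarrow> real^2"
  assumes n2: "n \<ge> 2"
    and U_per: "\<And>i. U (i + 2 * int n) = U i"
    and U_sym: "\<And>i. U (i + int n) = - U i"
    and U_convex_ccw: "\<And>i j. (j - i) mod (2 * int n) \<notin> {0, 1} \<Longrightarrow>
                         det2 (U (i+1) - U i) (U j - U i) > 0"
    and P_per: "\<And>i. P (i + 2 * int n) = P i"
    and P_edges: "\<And>i. \<exists>t\<ge>0. P (i+1) - P i = t *\<^sub>R Vh U i"
begin

abbreviation "V \<equiv> Vh U"
abbreviation "M \<equiv> Mv P n"
abbreviation "D j \<equiv> det2 (U j) (U (j + 1))"

lemma D_pos: "D j > 0"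
proof -
  have "(j + int n - j) mod (2 * int n) \<notin> {0, 1}" using n2 by simp
  from U_convex_ccw[OF this] have "det2 (U (j + 1) - U j) (- U j - U j) > 0" by (simp add: U_sym)
  then show ?thesis by (simp add: det2_def algebra_simps)
qed

lemma U_edge: "U (j + 1) - U j = D j *\<^sub>R V j"
  using D_pos[of j] by (simp add: Vh_def)

lemma det2_U_V: "det2 (U j) (V j) = 1" "det2 (U (j + 1)) (V j) = 1"
  using D_pos[of j] by (auto simp: Vh_def det2_simps det2_swap[of "U (j + 1)" "U j"])

lemma V_nonzero: "V j \<noteq> 0"
  using det2_U_V(1)[of j] by (auto simp: det2_def)

lemma D_shift: "D (j + int n) = D j"
  using U_sym[of j] U_sym[of "j + 1"] by (simp add: det2_simps algebra_simps)

lemma V_shift: "V (j + int n) = - V j"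
  using U_sym[of j] U_sym[of "j + 1"] D_shift[of j] by (simp add: Vh_def algebra_simps)

lemma V_periodic: "V (j + 2 * int n) = V j"
  using U_per[of j] U_per[of "j + 1"] by (simp add: Vh_def algebra_simps)

lemma det2_V_V_pos: "det2 (V j) (V (j + 1)) > 0"
proof -
  have "(j + 2 - j) mod (2 * int n) \<notin> {0, 1}" using n2 by simp
  from U_convex_ccw[OF this]
  have "det2 (U (j + 1) - U j) (U (j + 1 + 1) - U (j + 1)) > 0"
    by (simp add: det2_simps det2_swap[of "U (j + 1)" "U j"] det2_swap[of "U (j + 2)" "U j"]
        det2_swap[of "U (j + 2)" "U (j + 1)"] add.assoc)
  then have "det2 (D j *\<^sub>R V j) (D (j + 1) *\<^sub>R V (j + 1)) > 0" by (simp only: U_edge)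
  then show ?thesis using D_pos[of j] D_pos[of "j + 1"] by (simp add: det2_simps zero_less_mult_iff)
qed

lemma U_convex_weak: "det2 (U (i + 1) - U i) (U j - U i) \<ge> 0"
proof (cases "(j - i) mod (2 * int n) \<in> {0, 1}")
  case False then show ?thesis using U_convex_ccw[OF False] by simp
next
  case True
  have "U j = U (i + (j - i) mod (2 * int n))"
    using periodic_int_mod[of U, OF U_per] by (metis add.commute diff_add_cancel mod_add_right_eq)
  then have "U j = U i \<or> U j = U (i + 1)" using True by auto
  then show ?thesis by (auto simp: det2_simps det2_swap[of "U (i + 1)" "U i"])
qed

lemma M_shift: "M (j + int n) = M j"
  using P_per[of j] by (simp add: Mv_def algebra_simps mult_2)

lemma M_periodic: "M (j + 2 * int n) = M j"
  using M_shift[of j] M_shift[of "j + int n"] by (simp add: algebra_simps mult_2)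

lemma M_edge_alph: "M (j + 1) - M j = alph U P n j *\<^sub>R (U (j + 1) - U j)"
proof -
  obtain s t where st: "P (j + 1) - P j = s *\<^sub>R V j" "P (j + int n + 1) - P (j + int n) = t *\<^sub>R V (j + int n)"
    using P_edges by metis
  have "M (j + 1) - M j = (1/2) *\<^sub>R ((P (j + 1) - P j) + (P (j + int n + 1) - P (j + int n)))"
    by (simp add: Mv_def algebra_simps)
  also have "\<dots> = (1/2) *\<^sub>R (s *\<^sub>R V j + t *\<^sub>R V (j + int n))" by (simp only: st)
  also have "\<dots> = ((s - t) / 2) *\<^sub>R V j" by (simp add: V_shift algebra_simps diff_divide_distrib)
  also have "\<dots> = ((s - t) / 2 / D j) *\<^sub>R (U (j + 1) - U j)" using D_pos[of j] by (simp add: U_edge)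
  finally have ex: "M (j + 1) - M j = ((s - t) / 2 / D j) *\<^sub>R (U (j + 1) - U j)" .
  have "U (j + 1) - U j \<noteq> 0" using U_edge[of j] D_pos[of j] V_nonzero[of j] by simp
  then have "\<exists>!a. M (j + 1) - M j = a *\<^sub>R (U (j + 1) - U j)"
    using ex by (metis scaleR_cancel_right)
  from theI'[OF this] show ?thesis by (simp add: alph_def)
qed

definition mstep :: "int \<Rightarrow> real" where
  "mstep j = alph U P n j * D j"

lemma M_edge: "M (j + 1) - M j = mstep j *\<^sub>R V j"
  using M_edge_alph[of j] U_edge[of j] by (simp add: mstep_def)

lemma mstep_shift: "mstep (j + int n) = - mstep j"
proof -
  have "mstep (j + int n) *\<^sub>R V (j + int n) = mstep j *\<^sub>R V j"
    using M_shift[of j] M_shift[of "j + 1"] M_edge[of j] M_edge[of "j + int n"]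
    by (simp add: algebra_simps)
  then have "(- mstep (j + int n)) *\<^sub>R V j = mstep j *\<^sub>R V j" by (simp add: V_shift)
  then show ?thesis using V_nonzero[of j] by (metis minus_equation_iff scaleR_cancel_right)
qed

lemma beta_eq_sum: "beta U P n j = (1/2) * (\<Sum>i<n. mstep (j + int i))"
  unfolding beta_def sum_int_interval_shift by (simp add: mstep_def)

lemma beta_step: "beta U P n (j + 1) = beta U P n j - mstep j"
proof -
  have "(\<Sum>i<Suc n. mstep (j + int i)) = mstep j + (\<Sum>i<n. mstep (j + 1 + int i))"
    by (subst sum.lessThan_Suc_shift) (simp add: algebra_simps)
  moreover have "(\<Sum>i<Suc n. mstep (j + int i)) = (\<Sum>i<n. mstep (j + int i)) + mstep (j + int n)"
    by simp
  ultimately show ?thesis using mstep_shift[of j] by (simp add: beta_eq_sum algebra_simps)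
qed

lemma Nh_eq: "Nh U P n k = M k + beta U P n k *\<^sub>R V k"
  by (simp add: Nh_def)

lemma Nh_prev_eq: "Nh U P n (k - 1) = M k + beta U P n k *\<^sub>R V (k - 1)"
proof -
  have "M (k - 1) = M k - mstep (k - 1) *\<^sub>R V (k - 1)" using M_edge[of "k - 1"] by (simp add: algebra_simps)
  moreover have "beta U P n (k - 1) = beta U P n k + mstep (k - 1)" using beta_step[of "k - 1"] by simp
  ultimately show ?thesis by (simp add: Nh_def algebra_simps scaleR_add_left)
qed

lemma Im_cnj_cvec_V_V: "Im (cnj (cvec (V j)) * cvec (V (j + 1))) > 0"
  using det2_V_V_pos by (simp add: det2_cvec)

lemma winding_number_polygon_cvec_upcrossings:
  assumes "X (2 * int n) = X 0"
    and "\<And>j. \<exists>t. X (j + 1) - X j = t *\<^sub>R V j"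
    and "\<And>j. det2 (V j) (X j - y) \<noteq> 0"
  shows "2*pi * Re (winding_number (polygon_path (\<lambda>j. cvec (X j)) (2 * n)) (cvec y)) =
           turning (\<lambda>j. cvec (V j)) (2 * n) - 2*pi * upcrossings (\<lambda>j. det2 (V j) (X j - y)) (2 * n)"
proof -
  have "\<exists>t. cvec (X (j + 1)) - cvec (X j) = of_real t * cvec (V j)" for j
    using assms(2)[of j] by (metis cvec_diff cvec_scaleR)
  moreover have "(\<lambda>j. det2 (V j) (X j - y)) = (\<lambda>j. Im (cnj (cvec (V j)) * (cvec (X j) - cvec y)))"
    by (simp add: det2_cvec)
  ultimately show ?thesis
    using winding_number_polygon_path_upcrossings[where V = "\<lambda>j. cvec (V j)" and w = "\<lambda>j. cvec (X j)"
        and m = "2 * n" and z = "cvec y", OF _ _ Im_cnj_cvec_V_V] assms(1,3) V_periodic[of 0]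
    by (simp add: det2_cvec)
qed

lemma nonzero_by_periodicity:
  fixes F :: "int \<Rightarrow> real"
  assumes "\<And>j. F (j + 2 * int n) = F j" and "\<And>j. 0 \<le> j \<Longrightarrow> j < 2 * int n \<Longrightarrow> F j \<noteq> 0"
  shows "F j \<noteq> 0"
  using assms(2)[of "j mod (2 * int n)"] periodic_int_mod[of F, OF assms(1)] n2 by simp

lemma det2_V_U_midpoint_neg:
  assumes j: "1 \<le> j" "j \<le> 2 * int n - 1"
  shows "det2 (V j) (U j - (1/2) *\<^sub>R (U 0 + U 1)) < 0"
proof -
  let ?e = "U (j + 1) - U j"
  have pos: "det2 ?e (U 0 - U j) + det2 ?e (U 1 - U j) > 0"
  proof (cases "(0 - j) mod (2 * int n) \<in> {0, 1}")
    case False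
    then show ?thesis using U_convex_ccw[OF False] U_convex_weak[of j 1] by linarith
  next
    case True
    have "(0 - j) mod (2 * int n) = 2 * int n - j"
      using j by (simp add: mod_pos_pos_trivial zmod_zminus1_eq_if)
    then have "j = 2 * int n - 1" using True j n2 by auto
    then have "(1 - j) mod (2 * int n) = 2 mod (2 * int n)" by (metis diff_diff_eq2 minus_mod_self2 one_add_one)
    then have "(1 - j) mod (2 * int n) \<notin> {0, 1}" using n2 by simp
    from U_convex_ccw[OF this] show ?thesis using U_convex_weak[of j 0] by linarith
  qed
  have "D j * det2 (V j) (U j - (1/2) *\<^sub>R (U 0 + U 1)) = det2 ?e (U j - (1/2) *\<^sub>R (U 0 + U 1))"
    by (simp only: U_edge det2_scaleR_left)
  also have "\<dots> = - (1/2) * (det2 ?e (U 0 - U j) + det2 ?e (U 1 - U j))"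
    by (simp add: det2_simps algebra_simps)
  finally have "D j * det2 (V j) (U j - (1/2) *\<^sub>R (U 0 + U 1)) < 0" using pos by simp
  then show ?thesis using D_pos[of j] by (simp add: mult_less_0_iff)
qed

lemma exists_point_beyond_first_edge:
  obtains y where "det2 (V 0) (U 0 - y) > 0"
    and "\<And>j. 1 \<le> j \<Longrightarrow> j \<le> 2 * int n - 1 \<Longrightarrow> det2 (V j) (U j - y) < 0"
proof -
  define mid where "mid = (1/2) *\<^sub>R (U 0 + U 1)"
  have shifted: "det2 (V j) (U j - (mid + \<epsilon> *\<^sub>R U 0)) = det2 (V j) (U j - mid) - \<epsilon> * det2 (V j) (U 0)"
    for j \<epsilon> by (simp add: det2_simps)
  have edge0: "det2 (V 0) (U 0 - (mid + \<epsilon> *\<^sub>R U 0)) = \<epsilon>" for \<epsilon>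
  proof -
    have "U 0 - mid = - (D 0 / 2) *\<^sub>R V 0"
      using U_edge[of 0] by (simp add: mid_def vec_eq_iff field_simps)
    then have "U 0 - (mid + \<epsilon> *\<^sub>R U 0) = - (D 0 / 2) *\<^sub>R V 0 - \<epsilon> *\<^sub>R U 0"
      by (metis diff_diff_eq)
    then have "det2 (V 0) (U 0 - (mid + \<epsilon> *\<^sub>R U 0)) = det2 (V 0) (- (D 0 / 2) *\<^sub>R V 0 - \<epsilon> *\<^sub>R U 0)"
      by (simp only:)
    also have "\<dots> = \<epsilon>" using det2_U_V(1)[of 0] by (simp add: det2_simps det2_swap[of "V 0" "U 0"])
    finally show ?thesis .
  qed
  have "\<forall>\<^sub>F \<epsilon> in at_right 0. \<forall>j\<in>{1..2 * int n - 1}. det2 (V j) (U j - (mid + \<epsilon> *\<^sub>R U 0)) < 0"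
  proof (rule eventually_ball_finite)
    show "\<forall>j\<in>{1..2 * int n - 1}. \<forall>\<^sub>F \<epsilon> in at_right 0. det2 (V j) (U j - (mid + \<epsilon> *\<^sub>R U 0)) < 0"
    proof
      fix j assume "j \<in> {1..2 * int n - 1}"
      then have neg: "det2 (V j) (U j - mid) < 0" using det2_V_U_midpoint_neg by (simp add: mid_def)
      have "((\<lambda>\<epsilon>. det2 (V j) (U j - mid) - \<epsilon> * det2 (V j) (U 0)) \<longlongrightarrow> det2 (V j) (U j - mid)) (at_right 0)"
        by (auto intro!: tendsto_eq_intros)
      from order_tendstoD(2)[OF this neg]
      show "\<forall>\<^sub>F \<epsilon> in at_right 0. det2 (V j) (U j - (mid + \<epsilon> *\<^sub>R U 0)) < 0" by (simp only: shifted)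
    qed
  qed simp
  then have "\<forall>\<^sub>F \<epsilon> in at_right 0. \<epsilon> > 0 \<and>
      (\<forall>j\<in>{1..2 * int n - 1}. det2 (V j) (U j - (mid + \<epsilon> *\<^sub>R U 0)) < 0)"
    using eventually_at_right_less by (rule eventually_conj[rotated])
  then obtain \<epsilon> :: real where "\<epsilon> > 0" "\<forall>j\<in>{1..2 * int n - 1}. det2 (V j) (U j - (mid + \<epsilon> *\<^sub>R U 0)) < 0"
    using eventually_happens'[OF trivial_limit_at_right_real] by blast
  then show ?thesis using that[of "mid + \<epsilon> *\<^sub>R U 0"] edge0 by auto
qed

text \<open>The directions V turn once around: compute the winding number of the polygon U
  around the point beyond its first edge in two ways.\<close>

lemma turning_V: "turning (\<lambda>j. cvec (V j)) (2 * n) = 2 * pi"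
proof -
  obtain y where y0: "det2 (V 0) (U 0 - y) > 0"
    and y_neg: "\<And>j. 1 \<le> j \<Longrightarrow> j \<le> 2 * int n - 1 \<Longrightarrow> det2 (V j) (U j - y) < 0"
    by (rule exists_point_beyond_first_edge) auto
  define F where "F j = det2 (V j) (U j - y)" for j
  have F_periodic: "F (j + 2 * int n) = F j" for j by (simp add: F_def V_periodic U_per)
  have F_nonzero: "F j \<noteq> 0" for j
  proof (rule nonzero_by_periodicity[where F = F])
    show "F (j + 2 * int n) = F j" for j by (rule F_periodic)
    show "F j \<noteq> 0" if "0 \<le> j" "j < 2 * int n" for j
      using that y0 y_neg[of j] by (cases "j = 0") (auto simp: F_def)
  qed
  have "{j. j < 2 * n \<and> F (int j) < 0 \<and> F (int j + 1) > 0} = {2 * n - 1}"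
  proof (intro set_eqI iffI)
    fix j assume j: "j \<in> {j. j < 2 * n \<and> F (int j) < 0 \<and> F (int j + 1) > 0}"
    then have "\<not> int j + 1 \<le> 2 * int n - 1" using y_neg[of "int j + 1"] by (auto simp: F_def)
    then show "j \<in> {2 * n - 1}" using j by auto
  next
    fix j assume "j \<in> {2 * n - 1}"
    then have "int j = 2 * int n - 1" using n2 by auto
    then show "j \<in> {j. j < 2 * n \<and> F (int j) < 0 \<and> F (int j + 1) > 0}"
      using y_neg[of "int j"] y0 F_periodic[of 0] n2 by (auto simp: F_def)
  qed
  then have up: "upcrossings F (2 * n) = 1" by (simp add: upcrossings_def)
  let ?H = "{x. Im (cnj (cvec (V 0)) * (x - cvec (U 0))) \<ge> 0}"
  have "winding_number (polygon_path (\<lambda>j. cvec (U j)) (2 * n)) (cvec y) = 0"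
  proof (rule winding_number_zero_outside[OF path_polygon_path _ _ _ _, of ?H])
    show "convex ?H" by (rule convex_Im_cnj_halfplane)
    show "pathfinish (polygon_path (\<lambda>j. cvec (U j)) (2 * n)) = pathstart (polygon_path (\<lambda>j. cvec (U j)) (2 * n))"
      using U_per[of 0] by simp
    have H_iff: "cvec x \<in> ?H \<longleftrightarrow> det2 (V 0) (x - U 0) \<ge> 0" for x
      by (simp add: det2_cvec)
    show "cvec y \<notin> ?H" unfolding H_iff using y0 by (simp add: det2_simps)
    have "D 0 * det2 (V 0) (U j - U 0) \<ge> 0" for j
      using U_convex_weak[of 0 j] by (simp only: U_edge det2_scaleR_left)
    then have U_in: "cvec (U j) \<in> ?H" for j unfolding H_iff using D_pos[of 0] by (simp add: zero_le_mult_iff)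
    have "closed_segment (cvec (U j)) (cvec (U (j + 1))) \<subseteq> ?H" for j
      by (rule closed_segment_subset[OF U_in U_in convex_Im_cnj_halfplane])
    then show "path_image (polygon_path (\<lambda>j. cvec (U j)) (2 * n)) \<subseteq> ?H"
      using U_in by (auto simp: path_image_polygon_path)
  qed
  moreover have "2*pi * Re (winding_number (polygon_path (\<lambda>j. cvec (U j)) (2 * n)) (cvec y)) =
      turning (\<lambda>j. cvec (V j)) (2 * n) - 2*pi * upcrossings F (2 * n)"
    unfolding F_def[abs_def]
    by (rule winding_number_polygon_cvec_upcrossings) (use U_per[of 0] U_edge F_nonzero in \<open>auto simp: F_def\<close>)
  ultimately show ?thesis using up by simp
qed

lemma det2_V_M_shift: "det2 (V (j + int n)) (M (j + int n) - z) = - det2 (V j) (M j - z)"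
  by (simp add: V_shift M_shift det2_simps)

text \<open>Telescoping H_j = [U_j, M_j - z], which changes sign over half a period; its increments
  are D_j [V_{j+1/2}, M_j - z] + mstep_j.\<close>

lemma sum_D_det2_V_M:
  "(\<Sum>i<n. D (k + int i) * det2 (V (k + int i)) (M (k + int i) - z)) =
     - 2 * (det2 (U k) (M k - z) + beta U P n k)"
proof -
  define H where "H j = det2 (U j) (M j - z)" for j
  have step: "H (j + 1) - H j = D j * det2 (V j) (M j - z) + mstep j" for j
  proof -
    have "H (j + 1) = det2 (U (j + 1)) (M j - z) + mstep j * det2 (U (j + 1)) (V j)"
      unfolding H_def using M_edge[of j] by (simp add: algebra_simps det2_simps)
    also have "det2 (U (j + 1)) (M j - z) = H j + det2 (U (j + 1) - U j) (M j - z)"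
      by (simp add: H_def det2_simps)
    also have "det2 (U (j + 1) - U j) (M j - z) = D j * det2 (V j) (M j - z)"
      by (simp only: U_edge det2_scaleR_left)
    finally show ?thesis using det2_U_V(2)[of j] by simp
  qed
  have step': "H (k + int (Suc i)) - H (k + int i) = D (k + int i) * det2 (V (k + int i)) (M (k + int i) - z)
      + mstep (k + int i)" for i
    using step[of "k + int i"] by (simp add: ac_simps)
  have "(\<Sum>i<n. D (k + int i) * det2 (V (k + int i)) (M (k + int i) - z)) + 2 * beta U P n k =
      (\<Sum>i<n. H (k + int (Suc i)) - H (k + int i))"
    by (simp only: step' sum.distrib beta_eq_sum)
  also have "\<dots> = H (k + int n) - H k"
    using sum_lessThan_telescope[of "\<lambda>i. H (k + int i)" n] by simp
  moreover have "H (k + int n) = - H k" using U_sym[of k] M_shift[of k] by (simp add: H_def det2_simps)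
  ultimately show ?thesis by (simp add: H_def)
qed

lemma det2_at_involute_point:
  assumes z: "z = (1 - s) *\<^sub>R Nh U P n (k - 1) + s *\<^sub>R Nh U P n k"
  defines "b \<equiv> beta U P n k"
  shows "det2 (V (k - 1)) (M (k - 1) - z) = - b * s * det2 (V (k - 1)) (V k)"
    and "det2 (V k) (M k - z) = b * (1 - s) * det2 (V (k - 1)) (V k)"
    and "det2 (U k) (M k - z) = - b"
proof -
  have N1: "Nh U P n (k - 1) = M k + b *\<^sub>R V (k - 1)" and N2: "Nh U P n k = M k + b *\<^sub>R V k"
    unfolding b_def by (rule Nh_prev_eq, rule Nh_eq)
  have Mz: "M k - z = - (b * (1 - s)) *\<^sub>R V (k - 1) - (b * s) *\<^sub>R V k"
    unfolding z N1 N2 by (simp add: algebra_simps scaleR_add_right)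
  have "M (k - 1) - z = (M k - z) - mstep (k - 1) *\<^sub>R V (k - 1)"
    using M_edge[of "k - 1"] by (simp add: algebra_simps)
  then show "det2 (V (k - 1)) (M (k - 1) - z) = - b * s * det2 (V (k - 1)) (V k)"
    unfolding Mz by (simp add: det2_simps)
  show "det2 (V k) (M k - z) = b * (1 - s) * det2 (V (k - 1)) (V k)"
    unfolding Mz by (simp add: det2_simps det2_swap[of "V k" "V (k - 1)"])
  show "det2 (U k) (M k - z) = - b"
    using det2_U_V(1)[of k] det2_U_V(2)[of "k - 1"] unfolding Mz by (simp add: det2_simps algebra_simps)
qed

lemma involute_segment_sign_pattern:
  assumes z: "z \<in> open_segment (Nh U P n (k - 1)) (Nh U P n k)" and b0: "beta U P n k \<noteq> 0"
  obtains a1 a2 a3 a4 where "a1 < a2" "a2 < a3" "a3 < a4" "a4 - a1 \<le> 2 * int n"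
    and "det2 (V a1) (M a1 - z) < 0" "det2 (V a2) (M a2 - z) > 0"
    and "det2 (V a3) (M a3 - z) < 0" "det2 (V a4) (M a4 - z) > 0"
proof -
  define b where "b = beta U P n k"
  define F where "F j = det2 (V j) (M j - z)" for j
  define \<Delta> where "\<Delta> = det2 (V (k - 1)) (V k)"
  obtain s where s: "0 < s" "s < 1" and zs: "z = (1 - s) *\<^sub>R Nh U P n (k - 1) + s *\<^sub>R Nh U P n k"
    using z by (auto simp: in_segment)
  have \<Delta>: "\<Delta> > 0" using det2_V_V_pos[of "k - 1"] by (simp add: \<Delta>_def)
  have bb: "b * b > 0" using b0 by (auto simp: b_def zero_less_mult_iff linorder_neq_iff)
  have Fk1: "b * F (k - 1) = - (b * b) * s * \<Delta>" and Fk: "b * F k = (b * b) * (1 - s) * \<Delta>"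
    using det2_at_involute_point[OF zs] by (simp_all add: F_def b_def \<Delta>_def)
  have Fkn1: "b * F (k + int n - 1) = (b * b) * s * \<Delta>"
    using det2_V_M_shift[of "k - 1" z] Fk1 by (simp add: F_def algebra_simps)
  have "(\<Sum>i<n. D (k + int i) * F (k + int i)) = 0"
    using sum_D_det2_V_M[of k z] det2_at_involute_point(3)[OF zs] by (simp add: F_def)
  moreover have "(\<Sum>i<n. D (k + int i) * (b * F (k + int i))) = b * (\<Sum>i<n. D (k + int i) * F (k + int i))"
    by (simp add: sum_distrib_left algebra_simps)
  ultimately have sum0: "(\<Sum>i<n. D (k + int i) * (b * F (k + int i))) = 0" by simp
  have pos_k: "(b * b) * (1 - s) * \<Delta> > 0" and pos_kn: "(b * b) * s * \<Delta> > 0"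
    using bb s \<Delta> by simp_all
  have pos0: "D (k + int 0) * (b * F (k + int 0)) > 0"
    using pos_k D_pos[of k] by (simp only: of_nat_0 add_0_right Fk mult_pos_pos)
  have "\<exists>i<n. b * F (k + int i) < 0"
  proof (rule ccontr)
    assume A: "\<not> (\<exists>i<n. b * F (k + int i) < 0)"
    have "0 \<le> D (k + int i) * (b * F (k + int i))" if "i < n" for i
    proof -
      have "0 \<le> b * F (k + int i)" using A that by (meson not_less)
      then show ?thesis using D_pos[of "k + int i"] by simp
    qed
    then have "0 < (\<Sum>i<n. D (k + int i) * (b * F (k + int i)))"
      using n2 pos0 by (intro sum_pos2[of _ 0]) auto
    then show False using sum0 by simp
  qed
  then obtain i where i: "i < n" "b * F (k + int i) < 0" by blast
  have i0: "0 < i" using i(2) Fk pos_k by (cases i) auto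
  have i1: "int i < int n - 1"
  proof (rule ccontr)
    assume "\<not> int i < int n - 1"
    then have "k + int i = k + int n - 1" using i(1) by simp
    then have "b * F (k + int n - 1) < 0" using i(2) by (simp only:)
    then show False using Fkn1 pos_kn by linarith
  qed
  have s1: "b * F (k - 1) < 0" unfolding Fk1 using pos_kn by simp
  have s2: "b * F k > 0" using Fk pos_k by linarith
  have s4: "b * F (k + int n - 1) > 0" using Fkn1 pos_kn by linarith
  have s5: "b * F (k + int n) < 0" using s2 det2_V_M_shift[of k z] by (simp add: F_def)
  show ?thesis
  proof (cases "b > 0")
    case True
    then have "F (k - 1) < 0" "F k > 0" "F (k + int i) < 0" "F (k + int n - 1) > 0"
      using s1 s2 i(2) s4 by (auto simp: mult_less_0_iff zero_less_mult_iff)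
    then show ?thesis using that[of "k - 1" k "k + int i" "k + int n - 1"] i0 i1 by (simp add: F_def)
  next
    case False
    then have "F k < 0" "F (k + int i) > 0" "F (k + int n - 1) < 0" "F (k + int n) > 0"
      using s2 i(2) s4 s5 by (auto simp: mult_less_0_iff zero_less_mult_iff)
    then show ?thesis using that[of k "k + int i" "k + int n - 1" "k + int n"] i0 i1 by (simp add: F_def)
  qed
qed

abbreviation "Mpath \<equiv> polygon_path (\<lambda>j. cvec (M j)) (2 * n)"

lemma Mpath_closed: "pathfinish Mpath = pathstart Mpath"
  using M_periodic[of 0] by simp

lemma path_image_Mpath: "path_image Mpath = cvec ` polyline M (2 * n)"
  using path_image_polygon_path_cvec n2 by simp

lemma winding_number_Mpath_le:
  assumes z: "z \<notin> polyline M (2 * n)"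
    and a: "a1 < a2" "a2 < a3" "a3 < a4" "a4 - a1 \<le> 2 * int n"
    and sgn: "det2 (V a1) (M a1 - z) < 0" "det2 (V a2) (M a2 - z) > 0"
      "det2 (V a3) (M a3 - z) < 0" "det2 (V a4) (M a4 - z) > 0"
  shows "Re (winding_number Mpath (cvec z)) \<le> -1"
proof -
  define G where "G j x = Im (cnj (cvec (V j)) * (cvec (M j) - x))" for j x
  have Gz: "G j (cvec z) = det2 (V j) (M j - z)" for j by (simp add: G_def det2_cvec)
  define A where "A = {a1, a2, a3, a4}"
  have "cvec z \<notin> path_image Mpath" using z by (auto simp: path_image_Mpath)
  then have ev_wn: "\<forall>\<^sub>F x in nhds (cvec z). winding_number Mpath x = winding_number Mpath (cvec z)"
    by (rule eventually_winding_number_eq[OF path_polygon_path Mpath_closed])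
  have ev_sgn: "\<forall>\<^sub>F x in nhds (cvec z). \<forall>j\<in>A. G j x * G j (cvec z) > 0"
  proof (rule eventually_ball_finite)
    show "\<forall>j\<in>A. \<forall>\<^sub>F x in nhds (cvec z). G j x * G j (cvec z) > 0"
    proof
      fix j assume "j \<in> A"
      then have "G j (cvec z) \<noteq> 0" using sgn by (auto simp: A_def Gz)
      then have "0 < G j (cvec z) * G j (cvec z)" using not_real_square_gt_zero by blast
      moreover have "((\<lambda>x. G j x * G j (cvec z)) \<longlongrightarrow> G j (cvec z) * G j (cvec z)) (nhds (cvec z))"
        unfolding G_def by (intro tendsto_intros filterlim_ident)
      ultimately show "\<forall>\<^sub>F x in nhds (cvec z). G j x * G j (cvec z) > 0"
        by (rule order_tendstoD(1)[rotated])
    qed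
  qed (simp add: A_def)
  obtain r where r: "r > 0" and near: "\<And>x. dist x (cvec z) < r \<Longrightarrow>
      winding_number Mpath x = winding_number Mpath (cvec z) \<and> (\<forall>j\<in>A. G j x * G j (cvec z) > 0)"
    using eventually_conj[OF ev_wn ev_sgn] by (auto simp: eventually_nhds_metric)
  have "\<exists>x. cmod (x - cvec z) < r \<and> (\<forall>j\<in>{0..<2 * int n}. G j x \<noteq> 0)"
    unfolding G_def by (rule exists_near_point_off_lines) (simp_all add: r V_nonzero)
  then obtain x where x: "cmod (x - cvec z) < r" "\<forall>j\<in>{0..<2 * int n}. G j x \<noteq> 0" by blast
  define y where "y = (vector [Re x, Im x] :: real^2)"
  have xy: "cvec y = x" by (simp add: y_def cvec_vector)
  define f where "f j = det2 (V j) (M j - y)" for j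
  have f_G: "f j = G j x" for j by (simp add: f_def G_def det2_cvec xy)
  have f_periodic: "f (j + 2 * int n) = f j" for j by (simp add: f_def V_periodic M_periodic)
  have f_nonzero: "f j \<noteq> 0" for j
  proof (rule nonzero_by_periodicity[where F = f])
    show "f (j + 2 * int n) = f j" for j by (rule f_periodic)
    show "f j \<noteq> 0" if "0 \<le> j" "j < 2 * int n" for j using x(2) that by (simp add: f_G)
  qed
  have "\<forall>j\<in>A. f j * det2 (V j) (M j - z) > 0"
    using near[of x] x(1) by (simp add: f_G Gz dist_norm)
  then have "f a1 < 0" "f a2 > 0" "f a3 < 0" "f a4 > 0"
    using sgn by (auto simp: A_def zero_less_mult_iff)
  then have up: "2 \<le> upcrossings f (2 * n)"
    using n2 a f_periodic f_nonzero by (intro two_le_upcrossings[of "2 * n" f a1 a2 a3 a4]) simp_all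
  have "2*pi * Re (winding_number Mpath (cvec y)) =
      turning (\<lambda>j. cvec (V j)) (2 * n) - 2*pi * upcrossings f (2 * n)"
    unfolding f_def[abs_def]
    by (rule winding_number_polygon_cvec_upcrossings) (use M_periodic[of 0] M_edge f_nonzero in \<open>auto simp: f_def\<close>)
  then have "2*pi * Re (winding_number Mpath (cvec y)) = 2*pi * (1 - real (upcrossings f (2 * n)))"
    unfolding turning_V by (simp add: right_diff_distrib)
  then have "Re (winding_number Mpath (cvec y)) = 1 - real (upcrossings f (2 * n))" by simp
  moreover have "winding_number Mpath (cvec y) = winding_number Mpath (cvec z)"
    using near[of x] x(1) xy by (simp add: dist_norm)
  ultimately show ?thesis using up by simp
qed

lemma winding_number_Mpath_involute:
  assumes "z \<in> open_segment (Nh U P n (k - 1)) (Nh U P n k)" and "beta U P n k \<noteq> 0"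
    and "z \<notin> polyline M (2 * n)"
  shows "winding_number Mpath (cvec z) \<noteq> 0"
proof -
  obtain a1 a2 a3 a4 where "a1 < a2" "a2 < a3" "a3 < a4" "a4 - a1 \<le> 2 * int n"
    and "det2 (V a1) (M a1 - z) < 0" "det2 (V a2) (M a2 - z) > 0"
    and "det2 (V a3) (M a3 - z) < 0" "det2 (V a4) (M a4 - z) > 0"
    using involute_segment_sign_pattern[OF assms(1,2)] by blast
  then have "Re (winding_number Mpath (cvec z)) \<le> -1"
    by (rule winding_number_Mpath_le[OF assms(3)])
  then show ?thesis by auto
qed

lemma winding_number_Mpath_boundary:
  assumes P_convex: "polyline P (2 * n) = frontier (convex hull (P ` {0..<2 * int n}))"
    and b: "b \<in> polyline P (2 * n)" "b \<notin> polyline M (2 * n)"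
  shows "winding_number Mpath (cvec b) = 0"
proof (rule winding_number_zero_frontier_convex[OF path_polygon_path Mpath_closed])
  let ?K = "convex hull (P ` {0..<2 * int n})"
  have P_in: "P j \<in> ?K" for j
  proof -
    have "j mod (2 * int n) \<in> {0..<2 * int n}" using n2 by simp
    then have "P (j mod (2 * int n)) \<in> P ` {0..<2 * int n}" by (rule imageI)
    then have "P (j mod (2 * int n)) \<in> ?K" by (rule hull_inc)
    then show ?thesis using periodic_int_mod[of P, OF P_per, of j] by simp
  qed
  have M_in: "M j \<in> ?K" for j
  proof -
    have "(1/2) *\<^sub>R P j + (1/2) *\<^sub>R P (j + int n) \<in> ?K"
      by (rule convexD[OF convex_convex_hull P_in P_in]) simp_all
    then show ?thesis by (simp add: Mv_def scaleR_add_right)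
  qed
  have "closed_segment (M j) (M (j + 1)) \<subseteq> ?K" for j
    by (rule closed_segment_subset[OF M_in M_in convex_convex_hull])
  then have "polyline M (2 * n) \<subseteq> ?K" unfolding polyline_def by blast
  then show "path_image Mpath \<subseteq> cvec ` ?K" by (simp add: path_image_Mpath image_mono)
  show "convex ?K" by simp
  show "b \<in> frontier ?K" using b(1) P_convex by simp
  show "cvec b \<notin> path_image Mpath" using b(2) by (auto simp: path_image_Mpath)
qed

lemma involute_subset_region:
  assumes P_convex: "polyline P (2 * n) = frontier (convex hull (P ` {0..<2 * int n}))"
  shows "polyline (Nh U P n) (2 * n) \<subseteq> region_of (polyline P (2 * n)) (polyline M (2 * n))"
proof
  let ?R = "region_of (polyline P (2 * n)) (polyline M (2 * n))"
  fix z assume "z \<in> polyline (Nh U P n) (2 * n)"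
  then obtain i where "z \<in> closed_segment (Nh U P n i) (Nh U P n (i + 1))"
    unfolding polyline_def by blast
  then have "z \<in> closed_segment (Nh U P n (i + 1 - 1)) (Nh U P n (i + 1))" by simp
  then obtain k where z: "z \<in> closed_segment (Nh U P n (k - 1)) (Nh U P n k)" by blast
  have M_in: "M j \<in> ?R" for j
  proof -
    have "closed_segment (M j) (M (j + 1)) \<subseteq> polyline M (2 * n)"
      using n2 M_periodic by (intro closed_segment_subset_polyline) simp_all
    then show ?thesis using ends_in_segment(1)[of "M j" "M (j + 1)"] subset_region_of by blast
  qed
  show "z \<in> ?R"
  proof (cases "beta U P n k = 0")
    case True
    then have "Nh U P n (k - 1) = M k" "Nh U P n k = M k" using Nh_prev_eq[of k] Nh_eq[of k] by simp_all
    then show ?thesis using z M_in by simp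
  next
    case False
    have "open_segment (Nh U P n (k - 1)) (Nh U P n k) \<subseteq> ?R"
    proof
      fix w assume w: "w \<in> open_segment (Nh U P n (k - 1)) (Nh U P n k)"
      show "w \<in> ?R"
      proof (rule in_region_of_if_winding_number_nonzero[OF path_polygon_path Mpath_closed path_image_Mpath])
        show "winding_number Mpath (cvec b) = 0" if "b \<in> polyline P (2 * n)" "b \<notin> polyline M (2 * n)" for b
          using winding_number_Mpath_boundary[OF P_convex that] .
        show "winding_number Mpath (cvec w) \<noteq> 0" if "w \<notin> polyline M (2 * n)"
          using winding_number_Mpath_involute[OF w False that] .
      qed
    qed
    then have "closure (open_segment (Nh U P n (k - 1)) (Nh U P n k)) \<subseteq> ?R"
      by (rule closure_minimal) (rule closed_region_of[OF closed_polyline])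
    moreover have "Nh U P n (k - 1) \<noteq> Nh U P n k"
    proof
      assume "Nh U P n (k - 1) = Nh U P n k"
      then have "beta U P n k *\<^sub>R V (k - 1) = beta U P n k *\<^sub>R V k"
        using Nh_prev_eq[of k] Nh_eq[of k] by simp
      then have "V (k - 1) = V k" using False by simp
      then show False using det2_V_V_pos[of "k - 1"] by (simp add: det2_self)
    qed
    ultimately show ?thesis using z by auto
  qed
qed

end

theorem proposition4p3:
  fixes n :: nat and c :: real and U P :: "int \<Rightarrow> real^2"
  assumes n2: "n \<ge> 2"
    and cpos: "c > 0"
    and U_per: "\<And>i. U (i + 2 * int n) = U i"
    and U_dist: "inj_on U {0..<2 * int n}"
    and U_sym: "\<And>i. U (i + int n) = - U i"
    and U_convex_ccw: "\<And>i j. (j - i) mod (2 * int n) \<notin> {0, 1} \<Longrightarrow>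
                         det2 (U (i+1) - U i) (U j - U i) > 0"
    and P_per: "\<And>i. P (i + 2 * int n) = P i"
    and P_edges: "\<And>i. \<exists>t\<ge>0. P (i+1) - P i = t *\<^sub>R Vh U i"
    and P_opp: "\<And>i. P i - P (i + int n) = (2 * c) *\<^sub>R U i"
    and P_int: "interior (convex hull (P ` {0..<2 * int n})) \<noteq> {}"
    and P_convex: "polyline P (2 * n) = frontier (convex hull (P ` {0..<2 * int n}))"
  shows "polyline (Nh U P n) (2 * n) \<union> region_of (polyline P (2 * n)) (polyline (Nh U P n) (2 * n))
           \<subseteq> region_of (polyline P (2 * n)) (polyline (Mv P n) (2 * n))"
proof -
  interpret central_equidistant n U P
    using n2 U_per U_sym U_convex_ccw P_per P_edges by unfold_locales
  have "polyline (Nh U P n) (2 * n) \<subseteq> region_of (polyline P (2 * n)) (polyline (Mv P n) (2 * n))"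
    by (rule involute_subset_region[OF P_convex])
  then show ?thesis using region_of_subset by blast
qed

end
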